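(* Let $x^0\in\{0,1\}^n$ be the input of the hypermutation operator and let $x^i$ be the $i$-th bitstring it samples. Let $S\subset\{1,\dots,n\}$ be an arbitrary set of indices, and for a bitstring $z$ let $z_S$ denote the subsequence of $z$ consisting of the positions in $S$. For any target string $s^*\in\{0,1\}^{|S|}$ and any integer $m>|S|$, the probability that $x^i_S=s^*$ for all $i\in\{m,\dots,n-m\}$ is at least $\left(\frac{m-|S|+1}{n-|S|+1}\right)^{|S|}$.
   Context: The hypermutation operator on input $x^0\in\{0,1\}^n$ (disregarding its stopping rule) flips the $n$ bit positions one at a time in a uniformly random order, i.e. according to a uniformly random permutation of $\{1,\dots,n\}$; the $i$-th sampled bitstring $x^i$ is the string obtained from $x^0$ after the first $i$ flips, $i=1,\dots,n$. *)

theory Defs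
  imports "HOL-Probability.Probability" "HOL-Combinatorics.Multiset_Permutations"
begin

text \<open>Bitstrings of length n are bool lists; positions are 0,...,n-1.
  The flip order of the hypermutation operator is a uniformly random
  permutation of the positions, given as a list sigma of distinct positions
  (an element of permutations_of_set {0..<n}).\<close>

definition hm_sample :: "bool list \<Rightarrow> nat list \<Rightarrow> nat \<Rightarrow> bool list" where
  "hm_sample x0 \<sigma> i =
     map (\<lambda>j. if j \<in> set (take i \<sigma>) then \<not> (x0 ! j) else x0 ! j) [0..<length x0]"

definition hm_flip_order :: "nat \<Rightarrow> nat list pmf" where
  "hm_flip_order n = pmf_of_set (permutations_of_set {0..<n})"

end

theory Submission
  imports Defs
begin

(* Record for each position j the step q j at which it is flipped; q is a uniformly random
   permutation. The samples x^m, ..., x^(n-m) agree with the target on S as soon as every position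
   of S that has to change is flipped within the first m steps and every other position of S only
   after step n - m. Each of these |S| constraints leaves at least m admissible steps, so at least
   m (m-1) ... (m-|S|+1) (n-|S|)! of the n! permutations satisfy all of them, and the quotient is
   a product of the factors (m-t)/(n-t) >= (m-|S|+1)/(n-|S|+1). *)

lemma card_transpose_vimage_Int:
  assumes "a \<in> U" "b \<in> U"
  shows "card (Transposition.transpose a b -` A \<inter> U) = card (A \<inter> U)"
proof -
  have "Transposition.transpose a b -` A \<inter> U = Transposition.transpose a b ` (A \<inter> U)"
    using permutes_in_image[OF permutes_swap_id[OF assms]] by (auto simp: in_transpose_image_iff)
  then show ?thesis by (simp add: card_image)
qed

lemma card_permutes_Diff_singleton_le:
  assumes "finite U" "j \<in> U" "p \<in> U"
  shows "card {q. q permutes (U - {j}) \<and> (\<forall>i\<in>S. q i \<in> Transposition.transpose j p -` A i)}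
         \<le> card {q. q permutes U \<and> q j = p \<and> (\<forall>i\<in>S. q i \<in> A i)}"
proof (rule card_inj_on_le)
  let ?\<tau> = "Transposition.transpose j p"
  show "inj_on ((\<circ>) ?\<tau>) {q. q permutes (U - {j}) \<and> (\<forall>i\<in>S. q i \<in> ?\<tau> -` A i)}"
  proof (rule inj_onI)
    fix q r assume "?\<tau> \<circ> q = ?\<tau> \<circ> r"
    then have "?\<tau> \<circ> (?\<tau> \<circ> q) = ?\<tau> \<circ> (?\<tau> \<circ> r)" by simp
    then show "q = r" by (simp flip: comp_assoc)
  qed
  show "(\<circ>) ?\<tau> ` {q. q permutes (U - {j}) \<and> (\<forall>i\<in>S. q i \<in> ?\<tau> -` A i)}
        \<subseteq> {q. q permutes U \<and> q j = p \<and> (\<forall>i\<in>S. q i \<in> A i)}"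
  proof clarify
    fix q assume q: "q permutes (U - {j})" "\<forall>i\<in>S. q i \<in> ?\<tau> -` A i"
    have "q permutes U" using permutes_subset[OF q(1) Diff_subset] .
    then have "?\<tau> \<circ> q permutes U" by (rule permutes_compose[OF _ permutes_swap_id[OF assms(2,3)]])
    moreover have "q j = j" using permutes_not_in[OF q(1)] by simp
    ultimately show "?\<tau> \<circ> q permutes U \<and> (?\<tau> \<circ> q) j = p \<and> (\<forall>i\<in>S. (?\<tau> \<circ> q) i \<in> A i)"
      using q(2) by simp
  qed
  show "finite {q. q permutes U \<and> q j = p \<and> (\<forall>i\<in>S. q i \<in> A i)}"
    using finite_permutations[OF assms(1)] by (rule rev_finite_subset) auto
qed

lemma sum_card_fibers_le_card:
  assumes "finite A"
  shows "(\<Sum>b\<in>B. card {a\<in>A. f a = b}) \<le> card A"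
proof (cases "finite B")
  case True
  then have "(\<Sum>b\<in>B. card {a\<in>A. f a = b}) = card (\<Union>b\<in>B. {a\<in>A. f a = b})"
    using assms by (intro card_UN_disjoint[symmetric]) auto
  also have "\<dots> \<le> card A"
    using assms by (intro card_mono) auto
  finally show ?thesis .
qed simp

lemma prod_diff_lessThan_Suc:
  "(\<Prod>t<Suc k. (m - t :: nat)) = m * (\<Prod>t<k. (m - 1 - t))"
  by (subst prod.lessThan_Suc_shift) (simp only: diff_Suc_eq_diff_pred diff_zero)

lemma card_permutes_constrained_ge:
  assumes "finite U" "S \<subseteq> U" "\<forall>i\<in>S. m \<le> card (A i \<inter> U)"
  shows "(\<Prod>t<card S. (m - t)) * fact (card U - card S)
         \<le> card {q. q permutes U \<and> (\<forall>i\<in>S. q i \<in> A i)}"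
proof -
  have "finite S" using assms(1,2) by (rule finite_subset[rotated])
  then show ?thesis using assms
  proof (induction S arbitrary: U A m rule: finite_induct)
    case empty
    then show ?case by (simp add: card_permutations)
  next
    case (insert j S)
    define T where "T = {q. q permutes U \<and> (\<forall>i\<in>insert j S. q i \<in> A i)}"
    define K where "K = (\<Prod>t<card S. (m - 1 - t)) * fact (card (U - {j}) - card S)"
    have j: "j \<in> U" and S: "S \<subseteq> U - {j}" using insert.prems(2) insert.hyps(2) by auto
    (* Sort the permutations in T by the image p of j; composing with the transposition of j and p
       embeds the permutations of U - {j} that obey the transported constraints into each fiber. *)
    have K_le_fiber: "K \<le> card {q\<in>T. q j = p}" if p: "p \<in> A j \<inter> U" for p
    proof -
      let ?\<tau> = "Transposition.transpose j p"
      have "m - 1 \<le> card (?\<tau> -` A i \<inter> (U - {j}))" if "i \<in> S" for i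
      proof -
        have "m \<le> card (?\<tau> -` A i \<inter> U)"
          using insert.prems(3) that card_transpose_vimage_Int[OF j, of p "A i"] p by simp
        moreover have "?\<tau> -` A i \<inter> (U - {j}) = (?\<tau> -` A i \<inter> U) - {j}" by blast
        ultimately show ?thesis
          using diff_card_le_card_Diff[of "{j}" "?\<tau> -` A i \<inter> U"] by simp
      qed
      then have "K \<le> card {q. q permutes (U - {j}) \<and> (\<forall>i\<in>S. q i \<in> ?\<tau> -` A i)}"
        unfolding K_def using insert.prems(1) S by (intro insert.IH) auto
      also have "\<dots> \<le> card {q. q permutes U \<and> q j = p \<and> (\<forall>i\<in>S. q i \<in> A i)}"
        using insert.prems(1) j p by (intro card_permutes_Diff_singleton_le) auto
      also have "{q. q permutes U \<and> q j = p \<and> (\<forall>i\<in>S. q i \<in> A i)} = {q\<in>T. q j = p}"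
        using p by (auto simp: T_def)
      finally show ?thesis .
    qed
    have "m * K \<le> card (A j \<inter> U) * K"
      using insert.prems(3) by simp
    also have "\<dots> = (\<Sum>p\<in>A j \<inter> U. K)"
      by simp
    also have "\<dots> \<le> (\<Sum>p\<in>A j \<inter> U. card {q\<in>T. q j = p})"
      using K_le_fiber by (rule sum_mono)
    also have "\<dots> \<le> card T"
      using finite_permutations[OF insert.prems(1)]
      by (intro sum_card_fibers_le_card) (auto simp: T_def elim: rev_finite_subset)
    finally have "m * K \<le> card T" .
    moreover have "(\<Prod>t<card (insert j S). (m - t)) * fact (card U - card (insert j S)) = m * K"
    proof -
      have "card (insert j S) = Suc (card S)" "card (U - {j}) = card U - 1"
        using insert.hyps j by simp_all
      then show ?thesis
        by (simp only: K_def prod_diff_lessThan_Suc diff_Suc_eq_diff_pred mult.assoc)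
    qed
    ultimately show ?case
      by (simp only: T_def)
  qed
qed

lemma fact_eq_fact_diff_mult_prod:
  "k \<le> n \<Longrightarrow> (fact n :: nat) = fact (n - k) * (\<Prod>t<k. (n - t))"
proof (induction k)
  case (Suc k)
  then have "(fact (n - k) :: nat) = (n - k) * fact (n - Suc k)"
    by (simp add: fact_reduce Suc_diff_Suc)
  with Suc show ?case by simp
qed simp

lemma frac_le_frac_diff:
  assumes "t < k" "k < m" "m \<le> n"
  shows "(real m - real k + 1) / (real n - real k + 1) \<le> real (m - t) / real (n - t)"
proof -
  have "(real m - real k + 1) * (real n - real t) \<le> (real m - real t) * (real n - real k + 1)"
    using mult_nonneg_nonneg[of "real k - 1 - real t" "real n - real m"] assms
    by (simp add: algebra_simps)
  then show ?thesis using assms by (simp add: divide_simps)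
qed

lemma power_frac_le_falling_ratio:
  assumes "k < m" "m \<le> n"
  shows "((real m - real k + 1) / (real n - real k + 1)) ^ k
         \<le> real ((\<Prod>t<k. (m - t)) * fact (n - k)) / fact n"
proof -
  have "((real m - real k + 1) / (real n - real k + 1)) ^ k
        = (\<Prod>t<k. (real m - real k + 1) / (real n - real k + 1))"
    by simp
  also have "\<dots> \<le> (\<Prod>t<k. real (m - t) / real (n - t))"
    using frac_le_frac_diff assms by (intro prod_mono) auto
  also have "\<dots> = (\<Prod>t<k. real (m - t)) / (\<Prod>t<k. real (n - t))"
    by (rule prod_dividef)
  also have "\<dots> = real ((\<Prod>t<k. (m - t)) * fact (n - k)) / fact n"
    using fact_eq_fact_diff_mult_prod[of k n] assms
    by (simp add: of_nat_eq_iff[symmetric, where 'a=real] del: of_nat_eq_iff)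
  finally show ?thesis .
qed

lemma nths_conv_map_nth: "nths xs I = map ((!) xs) (nths [0..<length xs] I)"
  by (metis map_nth nths_map)

lemma distinct_imp_ex_map_eq:
  assumes "distinct xs" "length ys = length xs"
  shows "\<exists>f. map f xs = ys"
proof
  show "map (the \<circ> map_of (zip xs ys)) xs = ys"
    using assms by (intro nth_equalityI) (simp_all add: map_of_zip_nth)
qed

(* A flip order given by its ranks: q j is the step, counting from 0, at which position j is flipped. *)
definition flip_order_of_ranks :: "(nat \<Rightarrow> nat) \<Rightarrow> nat \<Rightarrow> nat list" where
  "flip_order_of_ranks q n = map (inv q) [0..<n]"

lemma flip_order_of_ranks_in_permutations_of_set:
  assumes "q permutes {0..<n}"
  shows "flip_order_of_ranks q n \<in> permutations_of_set {0..<n}"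
proof -
  have "[0..<n] \<in> permutations_of_set {0..<n}" by (rule permutations_of_setI) auto
  then have "map (inv q) [0..<n] \<in> map (inv q) ` permutations_of_set {0..<n}" by (rule imageI)
  then show ?thesis
    by (simp add: flip_order_of_ranks_def permutations_of_set_image_permutes[OF permutes_inv[OF assms]])
qed

lemma inj_on_flip_order_of_ranks:
  "inj_on (\<lambda>q. flip_order_of_ranks q n) {q. q permutes {0..<n}}"
proof (rule inj_onI, clarify)
  fix q r assume q: "q permutes {0..<n}" and r: "r permutes {0..<n}"
    and eq: "flip_order_of_ranks q n = flip_order_of_ranks r n"
  have "inv q x = inv r x" for x
  proof (cases "x < n")
    case True
    then show ?thesis using eq by (simp add: flip_order_of_ranks_def map_eq_conv)
  next
    case False
    then show ?thesis using permutes_not_in[OF permutes_inv[OF q]] permutes_not_in[OF permutes_inv[OF r]]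
      by simp
  qed
  then show "q = r" by (metis ext permutes_inv_inv q r)
qed

lemma mem_take_flip_order_of_ranks_iff:
  assumes "q permutes {0..<n}" "j < n"
  shows "j \<in> set (take i (flip_order_of_ranks q n)) \<longleftrightarrow> q j < i"
proof -
  have "set (take i (flip_order_of_ranks q n)) = inv q ` {0..<min i n}"
    by (simp add: flip_order_of_ranks_def take_map min_def)
  also have "j \<in> inv q ` {0..<min i n} \<longleftrightarrow> q j < min i n"
    using permutes_inverses[OF assms(1)] by (metis atLeastLessThan_iff image_iff zero_le)
  finally show ?thesis using permutes_in_image[OF assms(1)] assms(2) by auto
qed

lemma nth_hm_sample_flip_order_of_ranks:
  assumes "q permutes {0..<length x0}" "j < length x0"
  shows "hm_sample x0 (flip_order_of_ranks q (length x0)) i ! j = (if q j < i then \<not> x0 ! j else x0 ! j)"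
  using assms by (simp add: hm_sample_def mem_take_flip_order_of_ranks_iff)

lemma set_nths_upt:
  assumes "S \<subseteq> {0..<n}"
  shows "set (nths [0..<n] S) = S"
proof
  show "S \<subseteq> set (nths [0..<n] S)"
  proof
    fix j assume "j \<in> S"
    moreover have "j < n" "[0..<n] ! j = j" using \<open>j \<in> S\<close> assms by auto
    ultimately show "j \<in> set (nths [0..<n] S)" unfolding set_nths by force
  qed
qed (auto simp: set_nths)

lemma ex_map_eq_nths_upt:
  assumes "S \<subseteq> {0..<n}" "length s = card S"
  shows "\<exists>t. map t (nths [0..<n] S) = s"
proof (rule distinct_imp_ex_map_eq)
  show "length s = length (nths [0..<n] S)"
    using assms distinct_card[of "nths [0..<n] S"] set_nths_upt[OF assms(1)] by simp
qed simp

lemma nths_hm_sample_flip_order_of_ranks: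
  assumes "q permutes {0..<length x0}" "S \<subseteq> {0..<length x0}"
    and "map t (nths [0..<length x0] S) = s"
    and "\<forall>j\<in>S. q j \<in> (if t j = x0 ! j then {length x0 - m..<length x0} else {0..<m})"
    and "m \<le> i" "i \<le> length x0 - m"
  shows "nths (hm_sample x0 (flip_order_of_ranks q (length x0)) i) S = s"
proof -
  let ?x = "hm_sample x0 (flip_order_of_ranks q (length x0)) i"
  have x_eq_t: "?x ! j = t j" if j: "j \<in> S" for j
  proof -
    have "?x ! j = (if q j < i then \<not> x0 ! j else x0 ! j)"
      using j assms(2) by (intro nth_hm_sample_flip_order_of_ranks[OF assms(1)]) auto
    then show ?thesis
      using j assms(4-6) by (cases "t j = x0 ! j") auto
  qed
  have "nths ?x S = map ((!) ?x) (nths [0..<length x0] S)"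
    using nths_conv_map_nth[of ?x S] by (simp add: hm_sample_def)
  also have "\<dots> = map t (nths [0..<length x0] S)"
    using x_eq_t set_nths_upt[OF assms(2)] by (intro map_cong) auto
  finally show ?thesis using assms(3) by simp
qed

theorem lemma3:
  fixes x0 :: "bool list" and S :: "nat set" and s :: "bool list" and m n :: nat
  assumes "length x0 = n"
    and "S \<subseteq> {0..<n}"
    and "length s = card S"
    and "m > card S"
    and "m \<le> n"
  shows "measure_pmf.prob (hm_flip_order n)
           {\<sigma>. \<forall>i\<in>{m..n-m}. nths (hm_sample x0 \<sigma> i) S = s}
         \<ge> ((real m - real (card S) + 1) / (real n - real (card S) + 1)) ^ card S"
proof -
  define P where "P = permutations_of_set {0..<n}"
  define E where "E = {\<sigma>. \<forall>i\<in>{m..n-m}. nths (hm_sample x0 \<sigma> i) S = s}"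
  obtain t where t: "map t (nths [0..<n] S) = s" using ex_map_eq_nths_upt[OF assms(2,3)] ..
  define A where "A j = (if t j = x0 ! j then {n - m..<n} else {0..<m})" for j
  define Q where "Q = {q. q permutes {0..<n} \<and> (\<forall>j\<in>S. q j \<in> A j)}"
  have "(\<lambda>q. flip_order_of_ranks q n) ` Q \<subseteq> P \<inter> E"
    using nths_hm_sample_flip_order_of_ranks[of _ x0 S t s m] flip_order_of_ranks_in_permutations_of_set
      assms(1,2) t by (auto simp: Q_def A_def P_def E_def)
  then have Q_le: "card Q \<le> card (P \<inter> E)"
    using inj_on_flip_order_of_ranks[of n]
    by (intro card_inj_on_le) (auto simp: Q_def P_def intro: inj_on_subset)
  have "m \<le> card (A j \<inter> {0..<n})" for j
    using assms(5) by (simp add: A_def)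
  then have "(\<Prod>t<card S. (m - t)) * fact (n - card S) \<le> card Q"
    using card_permutes_constrained_ge[of "{0..<n}" S m A] assms(2) by (simp add: Q_def)
  with Q_le have count: "(\<Prod>t<card S. (m - t)) * fact (n - card S) \<le> card (P \<inter> E)"
    by (rule le_trans[rotated])
  have "((real m - real (card S) + 1) / (real n - real (card S) + 1)) ^ card S
        \<le> real ((\<Prod>t<card S. (m - t)) * fact (n - card S)) / fact n"
    using power_frac_le_falling_ratio assms(4,5) .
  also have "\<dots> \<le> real (card (P \<inter> E)) / fact n"
    using count by (intro divide_right_mono) (simp_all only: of_nat_le_iff fact_ge_zero)
  also have "\<dots> = measure_pmf.prob (hm_flip_order n) E"
    by (simp add: hm_flip_order_def P_def measure_pmf_of_set)
  finally show ?thesis unfolding E_def .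
qed

end
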